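(* Let $W$ be a finite-dimensional irreducible $H'_n(m)$-module and $\alpha,\beta\in\mathbb C^n$. Then $(\pi_{\alpha,\beta},L(W))$ is an irreducible $A_n(m)\rtimes H_n(m)$-module.
   Context: $n=2k$, $\bar\Gamma=m_1\mathbb Z\oplus\dots\oplus m_n\mathbb Z$, $A_n(m)=\mathbb C[t_1^{\pm m_1},\dots,t_n^{\pm m_n}]$ with monomials $t^r$, $r\in\bar\Gamma$. $(\cdot,\cdot)$ is the standard bilinear form on $\mathbb C^n$, $\bar r=(r_{k+1},\dots,r_{2k},-r_1,\dots,-r_k)$, $d_i=t_i\partial_{t_i}$, $D(u,r)=\sum_iu_it^rd_i$. $H_n(m)=\mathrm{span}\{d_i,\ h_r=D(\bar r,r): r\in\bar\Gamma\}$, a Lie algebra of derivations of $A_n(m)$, and $A_n(m)\rtimes H_n(m)$ is the semidirect product with $A_n(m)$ abelian and $[D(u,r),t^s]=(u,s)t^{r+s}$. $I(\bar r,r)=D(\bar r,r)-D(\bar r,0)$ and $H'_n(m)=\mathrm{span}\{I(\bar r,r):r\in\bar\Gamma\}$, a Lie subalgebra of $H_n(m)$. For an $H'_n(m)$-module $W$ and $\alpha,\beta\in\mathbb C^n$, $L(W)=W\otimes A_n(m)$ with action $D(\bar r,r)(w\otimes t^s)=(I(\bar r,r)w)\otimes t^{r+s}+(\bar r,\beta+s)w\otimes t^{r+s}$ ($0\ne r$), $D(u,0)(w\otimes t^s)=(u,\alpha+s)w\otimes t^s$, $t^r(w\otimes t^s)=w\otimes t^{r+s}$; this module is denoted $(\pi_{\alpha,\beta},L(W))$.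 *)

theory Defs
  imports Complex_Main
begin

text \<open>Coordinates are indexed 0..n-1 (n = 2k); a lattice vector
  r in Z^n is a function nat => int vanishing at indices >= n.
  Vectors in C^n (alpha, beta, u) are functions nat => complex (only indices < n matter).\<close>

definition vadd :: "(nat \<Rightarrow> int) \<Rightarrow> (nat \<Rightarrow> int) \<Rightarrow> (nat \<Rightarrow> int)" where
  "vadd r s = (\<lambda>i. r i + s i)"

definition vsub :: "(nat \<Rightarrow> int) \<Rightarrow> (nat \<Rightarrow> int) \<Rightarrow> (nat \<Rightarrow> int)" where
  "vsub r s = (\<lambda>i. r i - s i)"

definition ci :: "(nat \<Rightarrow> int) \<Rightarrow> (nat \<Rightarrow> complex)" where
  "ci r = (\<lambda>i. of_int (r i))"

definition Gam :: "nat \<Rightarrow> (nat \<Rightarrow> int) \<Rightarrow> (nat \<Rightarrow> int) set" where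
  "Gam n m = {r. (\<forall>i<n. m i dvd r i) \<and> (\<forall>i\<ge>n. r i = 0)}"

definition vbar :: "nat \<Rightarrow> (nat \<Rightarrow> int) \<Rightarrow> (nat \<Rightarrow> int)" where
  "vbar k r = (\<lambda>i. if i < k then r (k + i) else if i < 2 * k then - r (i - k) else 0)"

definition bf :: "nat \<Rightarrow> (nat \<Rightarrow> complex) \<Rightarrow> (nat \<Rightarrow> complex) \<Rightarrow> complex" where
  "bf n u v = (\<Sum>i<n. u i * v i)"

definition unitv :: "nat \<Rightarrow> (nat \<Rightarrow> complex)" where
  "unitv i = (\<lambda>j. if j = i then 1 else 0)"

text \<open>H'_n(m) has basis I(r-bar,r), r in Gamma-bar minus 0 (and I(0,0) = 0), with
  [I_r, I_s] = (r-bar,s)(I_{r+s} - I_r - I_s).  A module structure on a complex vector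
  space W is given by the action rho r of I(r-bar,r) for r in Gamma-bar.\<close>
definition Hprime_module ::
  "nat \<Rightarrow> (nat \<Rightarrow> int) \<Rightarrow> (complex \<Rightarrow> 'w::ab_group_add \<Rightarrow> 'w) \<Rightarrow> ((nat \<Rightarrow> int) \<Rightarrow> 'w \<Rightarrow> 'w) \<Rightarrow> bool" where
  "Hprime_module k m scale \<rho> \<longleftrightarrow>
     vector_space scale \<and>
     (\<forall>r\<in>Gam (2*k) m. Vector_Spaces.linear scale scale (\<rho> r)) \<and>
     \<rho> (\<lambda>_. 0) = (\<lambda>_. 0) \<and>
     (\<forall>r\<in>Gam (2*k) m. \<forall>s\<in>Gam (2*k) m. \<forall>w.
        \<rho> r (\<rho> s w) - \<rho> s (\<rho> r w) =
        scale (bf (2*k) (ci (vbar k r)) (ci s)) (\<rho> (vadd r s) w - \<rho> r w - \<rho> s w))"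

definition finite_dim :: "(complex \<Rightarrow> 'w::ab_group_add \<Rightarrow> 'w) \<Rightarrow> bool" where
  "finite_dim scale \<longleftrightarrow> (\<exists>B. finite B \<and> module.span scale B = UNIV)"

definition irreducible_Hp ::
  "nat \<Rightarrow> (nat \<Rightarrow> int) \<Rightarrow> (complex \<Rightarrow> 'w::ab_group_add \<Rightarrow> 'w) \<Rightarrow> ((nat \<Rightarrow> int) \<Rightarrow> 'w \<Rightarrow> 'w) \<Rightarrow> bool" where
  "irreducible_Hp k m scale \<rho> \<longleftrightarrow>
     (\<exists>w::'w. w \<noteq> 0) \<and>
     (\<forall>U. module.subspace scale U \<and> (\<forall>r\<in>Gam (2*k) m. \<rho> r ` U \<subseteq> U)
            \<longrightarrow> U = {0} \<or> U = UNIV)"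

text \<open>W \<otimes> A_n(m) is identified with finitely supported functions Gamma-bar \<rightarrow> W:
  f corresponds to sum_s f(s) \<otimes> t^s.\<close>
definition LW :: "nat \<Rightarrow> (nat \<Rightarrow> int) \<Rightarrow> ((nat \<Rightarrow> int) \<Rightarrow> 'w::zero) set" where
  "LW n m = {f. finite {s. f s \<noteq> 0} \<and> {s. f s \<noteq> 0} \<subseteq> Gam n m}"

definition fadd :: "('a \<Rightarrow> 'w::plus) \<Rightarrow> ('a \<Rightarrow> 'w) \<Rightarrow> ('a \<Rightarrow> 'w)" where
  "fadd f g = (\<lambda>s. f s + g s)"

definition fsub :: "('a \<Rightarrow> 'w::minus) \<Rightarrow> ('a \<Rightarrow> 'w) \<Rightarrow> ('a \<Rightarrow> 'w)" where
  "fsub f g = (\<lambda>s. f s - g s)"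

definition fscale :: "(complex \<Rightarrow> 'w \<Rightarrow> 'w) \<Rightarrow> complex \<Rightarrow> ('a \<Rightarrow> 'w) \<Rightarrow> ('a \<Rightarrow> 'w)" where
  "fscale scale c f = (\<lambda>s. scale c (f s))"

text \<open>Action of t^r: w \<otimes> t^s \<mapsto> w \<otimes> t^{r+s}.\<close>
definition tact :: "(nat \<Rightarrow> int) \<Rightarrow> ((nat \<Rightarrow> int) \<Rightarrow> 'w) \<Rightarrow> ((nat \<Rightarrow> int) \<Rightarrow> 'w)" where
  "tact r f = (\<lambda>s. f (vsub s r))"

text \<open>Action of D(u,0): w \<otimes> t^s \<mapsto> (u, alpha + s) w \<otimes> t^s.\<close>
definition dact :: "(complex \<Rightarrow> 'w \<Rightarrow> 'w) \<Rightarrow> nat \<Rightarrow> (nat \<Rightarrow> complex) \<Rightarrow> (nat \<Rightarrow> complex)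
     \<Rightarrow> ((nat \<Rightarrow> int) \<Rightarrow> 'w) \<Rightarrow> ((nat \<Rightarrow> int) \<Rightarrow> 'w)" where
  "dact scale n \<alpha> u f = (\<lambda>s. scale (bf n u (\<lambda>i. \<alpha> i + of_int (s i))) (f s))"

text \<open>Action of h_r = D(r-bar,r), r \<noteq> 0:
  w \<otimes> t^s \<mapsto> (I(r-bar,r) w) \<otimes> t^{r+s} + (r-bar, beta + s) w \<otimes> t^{r+s};  h_0 = 0.\<close>
definition hact :: "(complex \<Rightarrow> 'w::ab_group_add \<Rightarrow> 'w) \<Rightarrow> nat \<Rightarrow> ((nat \<Rightarrow> int) \<Rightarrow> 'w \<Rightarrow> 'w)
     \<Rightarrow> (nat \<Rightarrow> complex) \<Rightarrow> (nat \<Rightarrow> int) \<Rightarrow> ((nat \<Rightarrow> int) \<Rightarrow> 'w) \<Rightarrow> ((nat \<Rightarrow> int) \<Rightarrow> 'w)" where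
  "hact scale k \<rho> \<beta> r f =
     (if r = (\<lambda>_. 0) then (\<lambda>_. 0)
      else (\<lambda>s. \<rho> r (f (vsub s r))
              + scale (bf (2*k) (ci (vbar k r)) (\<lambda>i. \<beta> i + of_int (vsub s r i))) (f (vsub s r))))"

text \<open>Module over A_n(m) \<rtimes> H_n(m): this Lie algebra has basis t^r (r in Gamma-bar),
  d_i (i < n), h_r (r in Gamma-bar minus 0), with brackets
  [t^r,t^s] = 0, [d_i,t^s] = s_i t^s, [h_r,t^s] = (r-bar,s) t^{r+s},
  [d_i,d_j] = 0, [d_i,h_r] = r_i h_r, [h_r,h_s] = (r-bar,s) h_{r+s} (h_0 = 0).\<close>
definition lin_op :: "(complex \<Rightarrow> 'w::ab_group_add \<Rightarrow> 'w) \<Rightarrow> ('a \<Rightarrow> 'w) set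
     \<Rightarrow> (('a \<Rightarrow> 'w) \<Rightarrow> ('a \<Rightarrow> 'w)) \<Rightarrow> bool" where
  "lin_op scale C A \<longleftrightarrow> (\<forall>f\<in>C. A f \<in> C) \<and>
     (\<forall>f\<in>C. \<forall>g\<in>C. A (fadd f g) = fadd (A f) (A g)) \<and>
     (\<forall>c. \<forall>f\<in>C. A (fscale scale c f) = fscale scale c (A f))"

definition AH_module ::
  "nat \<Rightarrow> (nat \<Rightarrow> int) \<Rightarrow> (complex \<Rightarrow> 'w::ab_group_add \<Rightarrow> 'w) \<Rightarrow> ((nat \<Rightarrow> int) \<Rightarrow> 'w \<Rightarrow> 'w)
     \<Rightarrow> (nat \<Rightarrow> complex) \<Rightarrow> (nat \<Rightarrow> complex) \<Rightarrow> bool" where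
  "AH_module k m scale \<rho> \<alpha> \<beta> \<longleftrightarrow>
    (let n = 2*k; C = LW n m; G = Gam n m;
         T = tact; D = (\<lambda>i. dact scale n \<alpha> (unitv i)); H = hact scale k \<rho> \<beta>;
         pr = (\<lambda>r s. bf n (ci (vbar k r)) (ci s)) in
      (\<forall>r\<in>G. lin_op scale C (T r)) \<and> (\<forall>i<n. lin_op scale C (D i)) \<and>
      (\<forall>r\<in>G. lin_op scale C (H r)) \<and>
      (\<forall>f\<in>C. \<forall>r\<in>G. \<forall>s\<in>G. \<forall>i<n. \<forall>j<n.
         T r (T s f) = T s (T r f) \<and>
         fsub (D i (T s f)) (T s (D i f)) = fscale scale (of_int (s i)) (T s f) \<and>
         fsub (H r (T s f)) (T s (H r f)) = fscale scale (pr r s) (T (vadd r s) f) \<and>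
         D i (D j f) = D j (D i f) \<and>
         fsub (D i (H r f)) (H r (D i f)) = fscale scale (of_int (r i)) (H r f) \<and>
         fsub (H r (H s f)) (H s (H r f)) = fscale scale (pr r s) (H (vadd r s) f)))"

definition irreducible_AH ::
  "nat \<Rightarrow> (nat \<Rightarrow> int) \<Rightarrow> (complex \<Rightarrow> 'w::ab_group_add \<Rightarrow> 'w) \<Rightarrow> ((nat \<Rightarrow> int) \<Rightarrow> 'w \<Rightarrow> 'w)
     \<Rightarrow> (nat \<Rightarrow> complex) \<Rightarrow> (nat \<Rightarrow> complex) \<Rightarrow> bool" where
  "irreducible_AH k m scale \<rho> \<alpha> \<beta> \<longleftrightarrow>
    (let n = 2*k; C = LW n m; G = Gam n m; z = (\<lambda>_. 0) in
      C \<noteq> {z} \<and>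
      (\<forall>U. U \<subseteq> C \<and> z \<in> U \<and> (\<forall>f\<in>U. \<forall>g\<in>U. fadd f g \<in> U) \<and>
           (\<forall>c. \<forall>f\<in>U. fscale scale c f \<in> U) \<and>
           (\<forall>r\<in>G. tact r ` U \<subseteq> U) \<and>
           (\<forall>i<n. dact scale n \<alpha> (unitv i) ` U \<subseteq> U) \<and>
           (\<forall>r\<in>G. hact scale k \<rho> \<beta> r ` U \<subseteq> U)
         \<longrightarrow> U = {z} \<or> U = C))"

end

theory Submission
  imports Defs
begin

text \<open>Elements of \<open>L(W)\<close> are finitely supported functions \<open>\<Gamma> \<rightarrow> W\<close>, and all relations of
  \<open>A\<^sub>n(m) \<rtimes> H\<^sub>n(m)\<close> are checked pointwise; the only nontrivial one,
  \<open>[h\<^sub>r, h\<^sub>s] = (r\<^sup>-, s) h\<^sub>r\<^sub>+\<^sub>s\<close>, reduces to the defining relation of \<open>H'\<^sub>n(m)\<close> and the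
  skew-symmetry of \<open>(r\<^sup>-, s)\<close>.

  For irreducibility, let \<open>U\<close> be a nonzero submodule. The operator \<open>d\<^sub>i\<close> acts on \<open>w \<otimes> t\<^sup>s\<close>
  by the scalar \<open>\<alpha>\<^sub>i + s\<^sub>i\<close>, and these weights separate the lattice points, so \<open>U\<close> contains a
  nonzero pure tensor \<open>w \<otimes> t\<^sup>s\<close>; shifting by \<open>t\<^sup>-\<^sup>s\<close>, the degree-zero part
  \<open>U\<^sub>0 = {w. w \<otimes> t\<^sup>0 \<in> U}\<close> is nonzero. Since \<open>h\<^sub>r (w \<otimes> t\<^sup>0) = (I(r\<^sup>-,r) + c) w \<otimes> t\<^sup>r\<close> for a
  scalar \<open>c\<close>, \<open>U\<^sub>0\<close> is an \<open>H'\<^sub>n(m)\<close>-submodule of \<open>W\<close>, hence \<open>U\<^sub>0 = W\<close>; shifting back, \<open>U\<close>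
  contains all pure tensors and so equals \<open>L(W)\<close>.\<close>

lemma sum_lessThan_add_split: "(\<Sum>i<(a::nat)+b. f i) = (\<Sum>i<a. f i) + (\<Sum>i<b. f (a+i))"
  by (induction b) (simp_all add: add_ac)

lemma bf_vbar_eq: "bf (2*k) (ci (vbar k r)) v =
   (\<Sum>i<k. of_int (r (k+i)) * v i) - (\<Sum>i<k. of_int (r i) * v (k+i))"
proof -
  have "bf (2*k) (ci (vbar k r)) v = (\<Sum>i<k+k. ci (vbar k r) i * v i)"
    by (simp add: bf_def mult_2)
  also have "\<dots> = (\<Sum>i<k. ci (vbar k r) i * v i) + (\<Sum>i<k. ci (vbar k r) (k+i) * v (k+i))"
    by (rule sum_lessThan_add_split)
  also have "(\<Sum>i<k. ci (vbar k r) i * v i) = (\<Sum>i<k. of_int (r (k+i)) * v i)"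
    by (rule sum.cong) (auto simp: ci_def vbar_def)
  also have "(\<Sum>i<k. ci (vbar k r) (k+i) * v (k+i)) = - (\<Sum>i<k. of_int (r i) * v (k+i))"
    by (simp add: sum_negf[symmetric] ci_def vbar_def)
  finally show ?thesis by simp
qed

lemma bf_vbar_skew: "bf (2*k) (ci (vbar k s)) (ci r) = - bf (2*k) (ci (vbar k r)) (ci s)"
  unfolding bf_vbar_eq by (simp add: ci_def mult.commute)

lemma bf_add_ci [simp]: "bf n u (\<lambda>i. a i + of_int (y i)) = bf n u a + bf n u (ci y)"
  by (simp add: bf_def ci_def distrib_left sum.distrib)

lemma bf_ci_vsub [simp]: "bf n u (ci (vsub y r)) = bf n u (ci y) - bf n u (ci r)"
  by (simp add: bf_def ci_def vsub_def right_diff_distrib sum_subtractf)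

lemma bf_ci_vadd [simp]: "bf n u (ci (vadd y r)) = bf n u (ci y) + bf n u (ci r)"
  by (simp add: bf_def ci_def vadd_def distrib_left sum.distrib)

lemma bf_vbar_vadd [simp]:
  "bf n (ci (vbar k (vadd r s))) v = bf n (ci (vbar k r)) v + bf n (ci (vbar k s)) v"
  unfolding bf_def sum.distrib[symmetric]
  by (rule sum.cong) (auto simp: ci_def vbar_def vadd_def algebra_simps)

lemma bf_vbar_zero [simp]: "bf n (ci (vbar k (\<lambda>_. 0))) v = 0"
  unfolding bf_def by (rule sum.neutral) (auto simp: ci_def vbar_def)

lemma bf_unitv: "i < n \<Longrightarrow> bf n (unitv i) v = v i"
  by (simp add: bf_def unitv_def if_distrib[of "\<lambda>c. c * _"] cong: if_cong)

lemma vsub_vsub_commute: "vsub (vsub x s) r = vsub (vsub x r) s"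
  by (auto simp: vsub_def)

lemma vsub_vadd: "vsub x (vadd r s) = vsub (vsub x r) s"
  by (auto simp: vsub_def vadd_def)

lemma Gam_vadd: "r \<in> Gam n m \<Longrightarrow> s \<in> Gam n m \<Longrightarrow> vadd r s \<in> Gam n m"
  by (auto simp: Gam_def vadd_def)

lemma Gam_uminus: "r \<in> Gam n m \<Longrightarrow> (\<lambda>i. - r i) \<in> Gam n m"
  by (auto simp: Gam_def)

lemma Gam_zero: "(\<lambda>_. 0) \<in> Gam n m"
  by (auto simp: Gam_def)

lemma Gam_eq_iff: "r \<in> Gam n m \<Longrightarrow> s \<in> Gam n m \<Longrightarrow> r = s \<longleftrightarrow> (\<forall>i<n. r i = s i)"
  by (auto simp: Gam_def fun_eq_iff) (metis not_le)

lemma support_tact: "{s. tact r f s \<noteq> 0} = (\<lambda>t. vadd t r) ` {t. f t \<noteq> 0}"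
proof -
  have "\<And>s. s = vadd (vsub s r) r" "\<And>t. vsub (vadd t r) r = t" by (auto simp: vsub_def vadd_def)
  thus ?thesis by (auto simp: tact_def intro: image_eqI)
qed

lemma LW_if_support_subset_tact:
  assumes f: "f \<in> LW n m" and r: "r \<in> Gam n m"
    and supp: "{s. g s \<noteq> 0} \<subseteq> {s. tact r f s \<noteq> 0}"
  shows "g \<in> LW n m"
proof -
  have "finite {s. tact r f s \<noteq> 0}" "{s. tact r f s \<noteq> 0} \<subseteq> Gam n m"
    using f r unfolding support_tact LW_def by (auto intro: Gam_vadd)
  thus ?thesis using supp unfolding LW_def by (auto intro: finite_subset)
qed

lemma tact_lin_op: "r \<in> Gam n m \<Longrightarrow> lin_op scale (LW n m) (tact r)"
  unfolding lin_op_def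
  by (auto simp: fadd_def fscale_def intro: LW_if_support_subset_tact) (auto simp: tact_def)

lemma tact_tact_commute: "tact r (tact s f) = tact s (tact r f)"
  by (auto simp: tact_def vsub_vsub_commute)

definition tensor :: "'w::zero \<Rightarrow> (nat \<Rightarrow> int) \<Rightarrow> ((nat \<Rightarrow> int) \<Rightarrow> 'w)" where
  "tensor w s = (\<lambda>x. if x = s then w else 0)"

lemma tensor_in_LW: "s \<in> Gam n m \<Longrightarrow> tensor w s \<in> LW n m"
  unfolding LW_def tensor_def by (auto intro: finite_subset[of _ "{s}"])

lemma tensor_eq_zero_iff [simp]: "tensor w s = (\<lambda>_. 0) \<longleftrightarrow> w = 0"
  by (auto simp: tensor_def fun_eq_iff)

lemma tact_tensor: "tact r (tensor w s) = tensor w (vadd s r)"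
proof -
  have "\<And>x. vsub x r = s \<longleftrightarrow> x = vadd s r" by (auto simp: vsub_def vadd_def)
  thus ?thesis by (auto simp: tact_def tensor_def)
qed

lemma fadd_tensor: "fadd (tensor a s) (tensor b s) = tensor (a + b :: 'w::monoid_add) s"
  by (auto simp: fadd_def tensor_def)

lemma LW_subset_if_tensors:
  assumes zero: "(\<lambda>_. 0) \<in> U"
    and add: "\<And>f g. f \<in> U \<Longrightarrow> g \<in> U \<Longrightarrow> fadd f g \<in> U"
    and tensors: "\<And>s w. s \<in> Gam n m \<Longrightarrow> tensor w s \<in> U"
  shows "LW n m \<subseteq> (U :: ((nat \<Rightarrow> int) \<Rightarrow> 'w::monoid_add) set)"
proof -
  have "\<forall>f. {s. f s \<noteq> 0} \<subseteq> S \<longrightarrow> f \<in> U" if "finite S" "S \<subseteq> Gam n m" for S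
    using that
  proof (induction S rule: finite_induct)
    case empty
    then show ?case using zero by (simp add: fun_eq_iff)
  next
    case (insert a S)
    show ?case
    proof (intro allI impI)
      fix f :: "(nat \<Rightarrow> int) \<Rightarrow> 'w" assume supp: "{s. f s \<noteq> 0} \<subseteq> insert a S"
      have "{s. (f(a := 0)) s \<noteq> 0} \<subseteq> S" using supp by auto
      hence "f(a := 0) \<in> U" using insert by blast
      moreover have "tensor (f a) a \<in> U" using insert.prems by (intro tensors) auto
      moreover have "fadd (tensor (f a) a) (f(a := 0)) = f" by (auto simp: fadd_def tensor_def)
      ultimately show "f \<in> U" using add by metis
    qed
  qed
  thus ?thesis unfolding LW_def by blast
qed

locale cvector_space = vector_space scale for scale :: "complex \<Rightarrow> 'w::ab_group_add \<Rightarrow> 'w"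
begin

lemma fscale_tensor: "fscale scale c (tensor w s) = tensor (scale c w) s"
  by (auto simp: fscale_def tensor_def)

lemma dact_lin_op: "lin_op scale (LW n m) (dact scale n \<alpha> u)"
  unfolding lin_op_def
proof (intro conjI ballI allI)
  fix f :: "(nat \<Rightarrow> int) \<Rightarrow> 'w" assume "f \<in> LW n m"
  thus "dact scale n \<alpha> u f \<in> LW n m"
    by (rule LW_if_support_subset_tact[OF _ Gam_zero]) (auto simp: dact_def tact_def vsub_def)
qed (auto simp: dact_def fadd_def fscale_def scale_right_distrib scale_left_commute)

lemma dact_dact_commute: "dact scale n \<alpha> u (dact scale n \<alpha> v f) = dact scale n \<alpha> v (dact scale n \<alpha> u f)"
  by (auto simp: dact_def scale_left_commute)

lemma dact_tact_commutator:
  assumes "i < n"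
  shows "fsub (dact scale n \<alpha> (unitv i) (tact s f)) (tact s (dact scale n \<alpha> (unitv i) f))
    = fscale scale (of_int (s i)) (tact s f)"
  unfolding fsub_def fscale_def dact_def tact_def bf_unitv[OF assms]
  by (auto simp: vsub_def algebra_simps)

lemma dact_minus_weight:
  assumes "i < n"
  shows "fadd (dact scale n \<alpha> (unitv i) f) (fscale scale (- (\<alpha> i + of_int c)) f) x
    = scale (of_int (x i) - of_int c) (f x)"
  unfolding fadd_def fscale_def dact_def bf_unitv[OF assms]
  by (simp add: algebra_simps)

end

locale hprime_rep = cvector_space scale for scale :: "complex \<Rightarrow> 'w::ab_group_add \<Rightarrow> 'w" +
  fixes k :: nat and m :: "nat \<Rightarrow> int" and \<rho> :: "(nat \<Rightarrow> int) \<Rightarrow> 'w \<Rightarrow> 'w"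
  assumes rho_linear: "r \<in> Gam (2*k) m \<Longrightarrow> Vector_Spaces.linear scale scale (\<rho> r)"
    and rho_zero_index: "\<rho> (\<lambda>_. 0) = (\<lambda>_. 0)"
    and rho_commutator: "r \<in> Gam (2*k) m \<Longrightarrow> s \<in> Gam (2*k) m \<Longrightarrow>
        \<rho> r (\<rho> s w) - \<rho> s (\<rho> r w) =
        scale (bf (2*k) (ci (vbar k r)) (ci s)) (\<rho> (vadd r s) w - \<rho> r w - \<rho> s w)"

lemma Hprime_module_iff_hprime_rep: "Hprime_module k m scale \<rho> \<longleftrightarrow> hprime_rep scale k m \<rho>"
  unfolding Hprime_module_def hprime_rep_def hprime_rep_axioms_def cvector_space_def by blast

context hprime_rep
begin

lemma rho_add: "r \<in> Gam (2*k) m \<Longrightarrow> \<rho> r (x + y) = \<rho> r x + \<rho> r y"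
  using rho_linear Vector_Spaces.linear_iff by blast

lemma rho_scale: "r \<in> Gam (2*k) m \<Longrightarrow> \<rho> r (scale c x) = scale c (\<rho> r x)"
  using rho_linear Vector_Spaces.linear_iff by blast

lemma rho_zero [simp]: "r \<in> Gam (2*k) m \<Longrightarrow> \<rho> r 0 = 0"
  using rho_add[of r 0 0] by simp

lemma rho_diff: "r \<in> Gam (2*k) m \<Longrightarrow> \<rho> r (x - y) = \<rho> r x - \<rho> r y"
  using rho_add[of r "x - y" y] by (simp add: algebra_simps)

lemma hact_zero_index [simp]: "hact scale k \<rho> \<beta> (\<lambda>_. 0) f = (\<lambda>_. 0)"
  by (simp add: hact_def)

lemma hact_zero [simp]: "r \<in> Gam (2*k) m \<Longrightarrow> hact scale k \<rho> \<beta> r (\<lambda>_. 0) = (\<lambda>_. 0)"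
  by (auto simp: hact_def)

lemma hact_apply: "r \<noteq> (\<lambda>_. 0) \<Longrightarrow> hact scale k \<rho> \<beta> r f x =
   \<rho> r (f (vsub x r)) + scale (bf (2*k) (ci (vbar k r)) (\<lambda>i. \<beta> i + of_int (vsub x r i))) (f (vsub x r))"
  by (simp add: hact_def)

lemma hact_tensor:
  assumes "r \<in> Gam (2*k) m" "r \<noteq> (\<lambda>_. 0)"
  shows "hact scale k \<rho> \<beta> r (tensor w s)
    = tensor (\<rho> r w + scale (bf (2*k) (ci (vbar k r)) (\<lambda>i. \<beta> i + of_int (s i))) w) (vadd s r)"
proof
  fix x
  have "vsub x r = s \<longleftrightarrow> x = vadd s r" by (auto simp: vsub_def vadd_def)
  thus "hact scale k \<rho> \<beta> r (tensor w s) x = tensor (\<rho> r w + scale (bf (2*k) (ci (vbar k r)) (\<lambda>i. \<beta> i + of_int (s i))) w) (vadd s r) x"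
    using assms by (auto simp: hact_apply tensor_def simp del: bf_add_ci)
qed

lemma hact_lin_op:
  assumes r: "r \<in> Gam (2*k) m"
  shows "lin_op scale (LW (2*k) m) (hact scale k \<rho> \<beta> r)"
  unfolding lin_op_def
proof (intro conjI ballI allI)
  fix f :: "(nat \<Rightarrow> int) \<Rightarrow> 'w" assume "f \<in> LW (2*k) m"
  thus "hact scale k \<rho> \<beta> r f \<in> LW (2*k) m"
    by (rule LW_if_support_subset_tact[OF _ r]) (auto simp: hact_def tact_def r)
qed (auto simp: hact_def fadd_def fscale_def rho_add[OF r] rho_scale[OF r]
          scale_right_distrib scale_left_commute)

lemma hact_tact_commutator:
  "fsub (hact scale k \<rho> \<beta> r (tact s f)) (tact s (hact scale k \<rho> \<beta> r f))
    = fscale scale (bf (2*k) (ci (vbar k r)) (ci s)) (tact (vadd r s) f)"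
proof (cases "r = (\<lambda>_. 0)")
  case True
  then show ?thesis by (auto simp: fsub_def fscale_def tact_def)
next
  case False
  then show ?thesis
    by (auto simp: fsub_def fscale_def hact_apply tact_def vsub_vsub_commute vsub_vadd algebra_simps)
qed

lemma dact_hact_commutator:
  assumes r: "r \<in> Gam (2*k) m" and i: "i < 2*k"
  shows "fsub (dact scale (2*k) \<alpha> (unitv i) (hact scale k \<rho> \<beta> r f))
      (hact scale k \<rho> \<beta> r (dact scale (2*k) \<alpha> (unitv i) f))
    = fscale scale (of_int (r i)) (hact scale k \<rho> \<beta> r f)"
proof (cases "r = (\<lambda>_. 0)")
  case True
  then show ?thesis by (auto simp: fsub_def fscale_def dact_def)
next
  case False
  show ?thesis
    unfolding fsub_def fscale_def hact_apply[OF False] dact_def bf_unitv[OF i]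
    by (auto simp: rho_scale[OF r] rho_add[OF r] rho_diff[OF r] vsub_def algebra_simps
             simp del: bf_add_ci bf_ci_vsub)
qed

lemma hact_hact_commutator:
  assumes r: "r \<in> Gam (2*k) m" and s: "s \<in> Gam (2*k) m"
  shows "fsub (hact scale k \<rho> \<beta> r (hact scale k \<rho> \<beta> s f)) (hact scale k \<rho> \<beta> s (hact scale k \<rho> \<beta> r f))
     = fscale scale (bf (2*k) (ci (vbar k r)) (ci s)) (hact scale k \<rho> \<beta> (vadd r s) f)"
    (is "?lhs = fscale scale ?c _")
proof (cases "r = (\<lambda>_. 0) \<or> s = (\<lambda>_. 0)")
  case True
  hence "?c = 0" using bf_vbar_zero[of "2*k" k "ci s"] by (auto simp: bf_def ci_def)
  then show ?thesis using True r s by (auto simp: fsub_def fscale_def)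
next
  case False
  hence r0: "r \<noteq> (\<lambda>_. 0)" and s0: "s \<noteq> (\<lambda>_. 0)" by auto
  show ?thesis
  proof
    fix x
    define g where "g = f (vsub (vsub x r) s)"
    have "?lhs x = scale ?c (\<rho> (vadd r s) g
        + scale (bf (2*k) (ci (vbar k (vadd r s))) (\<lambda>i. \<beta> i + of_int (vsub (vsub x r) s i))) g)"
    proof -
      have "\<rho> r (\<rho> s g) = \<rho> s (\<rho> r g) + scale ?c (\<rho> (vadd r s) g - \<rho> r g - \<rho> s g)"
        using rho_commutator[OF r s, of g] by (simp add: algebra_simps)
      thus ?thesis
        unfolding fsub_def hact_apply[OF r0] hact_apply[OF s0]
        by (simp add: vsub_vsub_commute g_def[symmetric] rho_add[OF r] rho_add[OF s]
              rho_scale[OF r] rho_scale[OF s] bf_vbar_skew[of k s r])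
          (simp add: algebra_simps)
    qed
    also have "\<dots> = fscale scale ?c (hact scale k \<rho> \<beta> (vadd r s) f) x"
      by (cases "vadd r s = (\<lambda>_. 0)")
        (simp_all add: rho_zero_index fscale_def hact_apply vsub_vadd g_def
          del: bf_add_ci bf_ci_vsub bf_vbar_vadd)
    finally show "?lhs x = fscale scale ?c (hact scale k \<rho> \<beta> (vadd r s) f) x" .
  qed
qed

lemma AH_module_LW: "AH_module k m scale \<rho> \<alpha> \<beta>"
  unfolding AH_module_def Let_def
  by (intro conjI ballI allI impI;
      (rule tact_lin_op dact_lin_op hact_lin_op tact_tact_commute dact_tact_commutator
        hact_tact_commutator dact_dact_commute dact_hact_commutator hact_hact_commutator
       | assumption)+)

end

definition AH_submodule ::
  "nat \<Rightarrow> (nat \<Rightarrow> int) \<Rightarrow> (complex \<Rightarrow> 'w::ab_group_add \<Rightarrow> 'w) \<Rightarrow> ((nat \<Rightarrow> int) \<Rightarrow> 'w \<Rightarrow> 'w)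
     \<Rightarrow> (nat \<Rightarrow> complex) \<Rightarrow> (nat \<Rightarrow> complex) \<Rightarrow> ((nat \<Rightarrow> int) \<Rightarrow> 'w) set \<Rightarrow> bool" where
  "AH_submodule k m scale \<rho> \<alpha> \<beta> U \<longleftrightarrow>
     U \<subseteq> LW (2*k) m \<and> (\<lambda>_. 0) \<in> U \<and> (\<forall>f\<in>U. \<forall>g\<in>U. fadd f g \<in> U) \<and>
     (\<forall>c. \<forall>f\<in>U. fscale scale c f \<in> U) \<and>
     (\<forall>r\<in>Gam (2*k) m. tact r ` U \<subseteq> U) \<and>
     (\<forall>i<2*k. dact scale (2*k) \<alpha> (unitv i) ` U \<subseteq> U) \<and>
     (\<forall>r\<in>Gam (2*k) m. hact scale k \<rho> \<beta> r ` U \<subseteq> U)"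

lemma irreducible_AH_iff:
  fixes scale :: "complex \<Rightarrow> 'w::ab_group_add \<Rightarrow> 'w"
  shows "irreducible_AH k m scale \<rho> \<alpha> \<beta> \<longleftrightarrow> LW (2*k) m \<noteq> {(\<lambda>_. 0) :: (nat \<Rightarrow> int) \<Rightarrow> 'w} \<and>
     (\<forall>U. AH_submodule k m scale \<rho> \<alpha> \<beta> U \<longrightarrow> U = {\<lambda>_. 0} \<or> U = LW (2*k) m)"
  unfolding irreducible_AH_def AH_submodule_def Let_def by (rule refl)

locale ah_submodule = hprime_rep scale k m \<rho>
  for scale :: "complex \<Rightarrow> 'w::ab_group_add \<Rightarrow> 'w" and k m \<rho> +
  fixes \<alpha> \<beta> :: "nat \<Rightarrow> complex" and U :: "((nat \<Rightarrow> int) \<Rightarrow> 'w) set"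
  assumes submodule: "AH_submodule k m scale \<rho> \<alpha> \<beta> U"
begin

lemma subset_LW: "U \<subseteq> LW (2*k) m"
  and zero_in: "(\<lambda>_. 0) \<in> U"
  and fadd_in: "f \<in> U \<Longrightarrow> g \<in> U \<Longrightarrow> fadd f g \<in> U"
  and fscale_in: "f \<in> U \<Longrightarrow> fscale scale c f \<in> U"
  and tact_in: "r \<in> Gam (2*k) m \<Longrightarrow> f \<in> U \<Longrightarrow> tact r f \<in> U"
  and dact_in: "i < 2*k \<Longrightarrow> f \<in> U \<Longrightarrow> dact scale (2*k) \<alpha> (unitv i) f \<in> U"
  and hact_in: "r \<in> Gam (2*k) m \<Longrightarrow> f \<in> U \<Longrightarrow> hact scale k \<rho> \<beta> r f \<in> U"
  using submodule unfolding AH_submodule_def by (auto simp: image_subset_iff)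

lemma exists_tensor_in:
  assumes "f \<in> U" "f \<noteq> (\<lambda>_. 0)"
  shows "\<exists>s w. s \<in> Gam (2*k) m \<and> w \<noteq> 0 \<and> tensor w s \<in> U"
  using assms
proof (induction "card {s. f s \<noteq> 0}" arbitrary: f rule: less_induct)
  case less
  define S where "S = {s. f s \<noteq> 0}"
  have finS: "finite S" and SG: "S \<subseteq> Gam (2*k) m"
    using less.prems(1) subset_LW unfolding S_def LW_def by auto
  obtain s1 where s1: "s1 \<in> S" using less.prems(2) unfolding S_def by (auto simp: fun_eq_iff)
  show ?case
  proof (cases "S = {s1}")
    case True
    hence "f = tensor (f s1) s1" unfolding tensor_def S_def by (metis (mono_tags) mem_Collect_eq singletonD)
    moreover have "s1 \<in> Gam (2*k) m" "f s1 \<noteq> 0" using s1 SG unfolding S_def by auto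
    ultimately show ?thesis using less.prems(1) by metis
  next
    case False
    then obtain s0 where s0: "s0 \<in> S" "s0 \<noteq> s1" using s1 by auto
    then obtain i where i: "i < 2*k" "s0 i \<noteq> s1 i" using s1 SG Gam_eq_iff by blast
    txt \<open>\<open>d\<^sub>i - (\<alpha>\<^sub>i + s1\<^sub>i)\<close> kills the \<open>s1\<close>-component but not the \<open>s0\<close>-component.\<close>
    define g where "g = fadd (dact scale (2*k) \<alpha> (unitv i) f) (fscale scale (- (\<alpha> i + of_int (s1 i))) f)"
    have g_in: "g \<in> U" unfolding g_def by (intro fadd_in fscale_in dact_in i less.prems(1))
    have g_apply: "g x = scale (of_int (x i) - of_int (s1 i)) (f x)" for x
      unfolding g_def by (rule dact_minus_weight[OF i(1)])
    have "{x. g x \<noteq> 0} \<subset> S" using s1 by (auto simp: g_apply S_def)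
    hence "card {x. g x \<noteq> 0} < card S" using finS by (simp add: psubset_card_mono)
    moreover have "g \<noteq> (\<lambda>_. 0)"
    proof
      assume "g = (\<lambda>_. 0)"
      hence "g s0 = 0" by simp
      thus False using i(2) s0(1) by (simp add: g_apply S_def)
    qed
    ultimately show ?thesis using less.hyps g_in unfolding S_def by blast
  qed
qed

lemma tensor_in_iff_tensor_zero_in:
  assumes s: "s \<in> Gam (2*k) m"
  shows "tensor w s \<in> U \<longleftrightarrow> tensor w (\<lambda>_. 0) \<in> U"
proof
  assume "tensor w s \<in> U"
  hence "tact (\<lambda>i. - s i) (tensor w s) \<in> U" by (rule tact_in[OF Gam_uminus[OF s]])
  moreover have "vadd s (\<lambda>i. - s i) = (\<lambda>_. 0)" by (auto simp: vadd_def)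
  ultimately show "tensor w (\<lambda>_. 0) \<in> U" by (simp add: tact_tensor)
next
  assume "tensor w (\<lambda>_. 0) \<in> U"
  hence "tact s (tensor w (\<lambda>_. 0)) \<in> U" by (rule tact_in[OF s])
  moreover have "vadd (\<lambda>_. 0) s = s" by (auto simp: vadd_def)
  ultimately show "tensor w s \<in> U" by (simp add: tact_tensor)
qed

definition component_zero :: "'w set" where
  "component_zero = {w. tensor w (\<lambda>_. 0) \<in> U}"

lemma subspace_component_zero: "subspace component_zero"
  unfolding subspace_def component_zero_def
proof (intro conjI ballI allI; unfold mem_Collect_eq)
  show "tensor 0 (\<lambda>_. 0) \<in> U" using zero_in by (simp add: tensor_def)
next
  fix x y assume "tensor x (\<lambda>_. 0) \<in> U" "tensor y (\<lambda>_. 0) \<in> U"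
  thus "tensor (x + y) (\<lambda>_. 0) \<in> U" using fadd_in fadd_tensor by metis
next
  fix c x assume "tensor x (\<lambda>_. 0) \<in> U"
  thus "tensor (scale c x) (\<lambda>_. 0) \<in> U" using fscale_in fscale_tensor by metis
qed

lemma rho_component_zero:
  assumes r: "r \<in> Gam (2*k) m" and w: "w \<in> component_zero"
  shows "\<rho> r w \<in> component_zero"
proof (cases "r = (\<lambda>_. 0)")
  case True
  then show ?thesis using zero_in by (simp add: rho_zero_index component_zero_def tensor_def)
next
  case False
  define c where "c = bf (2*k) (ci (vbar k r)) (\<lambda>i. \<beta> i)"
  have "hact scale k \<rho> \<beta> r (tensor w (\<lambda>_. 0)) = tensor (\<rho> r w + scale c w) r"
    using hact_tensor[OF r False] by (simp add: c_def vadd_def ci_def bf_def)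
  hence "tensor (\<rho> r w + scale c w) r \<in> U"
    using hact_in[OF r] w by (metis component_zero_def mem_Collect_eq)
  hence "tensor (\<rho> r w + scale c w) (\<lambda>_. 0) \<in> U" by (simp add: tensor_in_iff_tensor_zero_in[OF r])
  moreover have "tensor (scale (- c) w) (\<lambda>_. 0) \<in> U"
    using fscale_in w fscale_tensor unfolding component_zero_def by (metis mem_Collect_eq)
  ultimately have "fadd (tensor (\<rho> r w + scale c w) (\<lambda>_. 0)) (tensor (scale (- c) w) (\<lambda>_. 0)) \<in> U"
    by (rule fadd_in)
  thus ?thesis by (simp add: fadd_tensor component_zero_def)
qed

lemma eq_LW_if_component_zero_UNIV:
  assumes "component_zero = UNIV"
  shows "U = LW (2*k) m"
proof -
  have "tensor w s \<in> U" if "s \<in> Gam (2*k) m" for s w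
    using assms tensor_in_iff_tensor_zero_in[OF that] by (auto simp: component_zero_def)
  hence "LW (2*k) m \<subseteq> U" using zero_in fadd_in by (intro LW_subset_if_tensors) auto
  thus ?thesis using subset_LW by blast
qed

end

lemma (in hprime_rep) irreducible_AH_if_irreducible_Hp:
  assumes irr: "irreducible_Hp k m scale \<rho>"
  shows "irreducible_AH k m scale \<rho> \<alpha> \<beta>"
  unfolding irreducible_AH_iff
proof (intro conjI allI impI)
  obtain w :: 'w where "w \<noteq> 0" using irr unfolding irreducible_Hp_def by blast
  thus "LW (2*k) m \<noteq> {(\<lambda>_. 0) :: (nat \<Rightarrow> int) \<Rightarrow> 'w}"
    using tensor_in_LW[OF Gam_zero] by force
next
  fix U assume "AH_submodule k m scale \<rho> \<alpha> \<beta> U"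
  then interpret ah_submodule scale k m \<rho> \<alpha> \<beta> U by unfold_locales
  show "U = {\<lambda>_. 0} \<or> U = LW (2*k) m"
  proof (cases "U = {\<lambda>_. 0}")
    case False
    then obtain f where "f \<in> U" "f \<noteq> (\<lambda>_. 0)" using zero_in by blast
    then obtain s w where s: "s \<in> Gam (2*k) m" and "w \<noteq> 0" "tensor w s \<in> U"
      using exists_tensor_in by blast
    hence "w \<in> component_zero" "w \<noteq> 0"
      by (auto simp: component_zero_def tensor_in_iff_tensor_zero_in[OF s, symmetric])
    moreover have "component_zero = {0} \<or> component_zero = UNIV"
      using irr subspace_component_zero rho_component_zero unfolding irreducible_Hp_def by blast
    ultimately show ?thesis using eq_LW_if_component_zero_UNIV by blast
  qed simp
qed

theorem lemma6p2:
  fixes k :: nat and m :: "nat \<Rightarrow> int"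
    and scale :: "complex \<Rightarrow> 'w::ab_group_add \<Rightarrow> 'w"
    and \<rho> :: "(nat \<Rightarrow> int) \<Rightarrow> 'w \<Rightarrow> 'w"
    and \<alpha> \<beta> :: "nat \<Rightarrow> complex"
  assumes "0 < k"
    and "\<forall>i<2*k. 0 < m i"
    and "Hprime_module k m scale \<rho>"
    and "finite_dim scale"
    and "irreducible_Hp k m scale \<rho>"
  shows "AH_module k m scale \<rho> \<alpha> \<beta> \<and> irreducible_AH k m scale \<rho> \<alpha> \<beta>"
proof -
  interpret hprime_rep scale k m \<rho>
    using assms(3) by (simp add: Hprime_module_iff_hprime_rep)
  show ?thesis using AH_module_LW irreducible_AH_if_irreducible_Hp[OF assms(5)] by blast
qed

end
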